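(* Let $v\in\mathrm{Box}(\Sigma_+)$ with $\gamma^v$ and $\gamma^v(t)$ ($t\in\mathcal I(y^v)$) as in the context. (i) If $1\notin\mathcal I(y^v)$, then $\mathcal S^{es}_+(\gamma^v)=\mathcal S_+(\gamma^v)$. If $1\in\mathcal I(y^v)$, then $\gamma^v(1)=\gamma^v$ and $\mathcal S_+(\gamma^v)\setminus\mathcal S^{es}_+(\gamma^v)=\mathcal S_-(\gamma^v)\setminus\mathcal S^{es}_-(\gamma^v)$. (ii) For every $t\in\mathcal I(y^v)$, the images of $\mathcal S^{es}_+(\gamma^v)$ and $\mathcal S^{es}_-(\gamma^v(t))$ under the projection $p:\mathbb L\to\mathbb L/\langle h\rangle$ coincide.
   Context: $N\cong\mathbb Z^d$ lattice, $\mathcal A=\{v_1,\dots,v_n\}\subset N$ generating $N$ with a homomorphism $\mathrm h:N\to\mathbb Z$, $\mathrm h(v_j)=1$; $\mathbb L=\{l\in\mathbb Z^n:\sum l_jv_j=0\}$; fix $\beta\in N$. $\Sigma_\pm$ are the fans supported on $\mathbb R_{\ge0}\mathrm{Conv}(\mathcal A)$ of two regular triangulations with vertices in $\mathcal A$ joined by an edge of the secondary polytope; there is a circuit $I$ with primitive relation $h\in\mathbb L$, $I_\pm=\{v_j:\pm h_j>0\}$, such that (with $\mathcal F\subset\mathcal A\setminus I$ separating if $\mathcal F\cup(I\setminus\{v\})$ generates a maximal cone of $\Sigma_\pm$ for all $v\in I_\pm$) $\Sigma_-$ arises from $\Sigma_+$ by replacing the maximal cones $\mathcal F\cup(I\setminus\{v\})$,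 $v\in I_+$, by $\mathcal F\cup(I\setminus\{v\})$, $v\in I_-$, for all separating $\mathcal F$; those cones are the essential maximal cones $\Sigma^{es}_\pm(d)$. $\mathrm{Box}(\Sigma_+)$: $v=\sum q^v_jv_j\in N$, $0\le q^v_j<1$, $q^v_j=0$ unless $v_j$ spans a ray of a fixed maximal cone of $\Sigma_+$; $y^v_j=e^{2\pi iq^v_j}$. $\mathcal I(r)=\{t\in\mathbb C^*:r_jt^{h_j}=1$ for some $j$ with $v_j\in I_-\}$. For $v\in\mathrm{Box}(\Sigma_+)$ choose $\gamma^v\in\mathbb Q^n$ with $e^{2\pi i\gamma^v_j}=y^v_j$ and $\sum\gamma^v_jv_j=\beta$; for each $t\in\mathcal I(y^v)$ (a root of unity) fix $\theta_t\in\mathbb Q$ with $e^{2\pi i\theta_t}=t$, with $\theta_1=0$, and set $\gamma^v(t)=\gamma^v+\theta_th$. For a fan $\Sigma$ (one of $\Sigma_\pm$), $\gamma\in\mathbb Q^n$ and $l\in\mathbb L$, $\mathrm{Supp}(l)=\{v_j:l_j+\gamma_j\notin\mathbb Z_{\ge0}\}$; $\mathcal S_\pm(\gamma)$ is the set of $l\in\mathbb L$ such that all elements of $\mathrm{Supp}(l)$ generate rays of one maximal cone of $\Sigma_\pm$, and $\mathcal S^{es}_\pm(\gamma)$ the set of $l$ such that this holds for one essential maximal cone of $\Sigma_\pm$. *)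

theory Defs
  imports "HOL-Analysis.Analysis"
begin

text \<open>The lattice N is int^'d; the points of A are v 0, ..., v (n-1).
  Index sets S of {..<n} stand for the cones generated by the v j, j in S.\<close>

definition rvec :: "int^'d \<Rightarrow> real^'d" where
  "rvec x = (\<chi> i. real_of_int (x $ i))"

text \<open>The relation lattice L (elements of Z^n as functions nat => int vanishing beyond n).\<close>
definition latL :: "nat \<Rightarrow> (nat \<Rightarrow> int^'d) \<Rightarrow> (nat \<Rightarrow> int) set" where
  "latL n v = {l. (\<forall>j\<ge>n. l j = 0) \<and> (\<Sum>j<n. l j *s v j) = 0}"

text \<open>Regular triangulation of A with vertices in A (height function w, lower faces
  cut out by linear functionals psi, which are the affine functions on the slice h = 1).\<close>
definition regular_triangulation :: "nat \<Rightarrow> (nat \<Rightarrow> int^'d) \<Rightarrow> nat set set \<Rightarrow> bool" where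
  "regular_triangulation n v T \<longleftrightarrow> (\<exists>w::nat \<Rightarrow> real.
     (\<forall>\<psi>::real^'d. (\<forall>k<n. \<psi> \<bullet> rvec (v k) \<le> w k) \<longrightarrow>
        independent (rvec ` v ` {k. k < n \<and> \<psi> \<bullet> rvec (v k) = w k})) \<and>
     T = {S. \<exists>\<psi>::real^'d. (\<forall>k<n. \<psi> \<bullet> rvec (v k) \<le> w k) \<and>
              S = {k. k < n \<and> \<psi> \<bullet> rvec (v k) = w k} \<and> card S = CARD('d)})"

text \<open>Volume of a simplex (up to a global constant factor), via the pyramid over it with apex 0.\<close>
definition simplex_vol :: "(nat \<Rightarrow> int^'d) \<Rightarrow> nat set \<Rightarrow> real" where
  "simplex_vol v S = measure lebesgue (convex hull (insert 0 (rvec ` v ` S)))"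

definition gkz :: "(nat \<Rightarrow> int^'d) \<Rightarrow> nat set set \<Rightarrow> nat \<Rightarrow> real" where
  "gkz v T j = (\<Sum>S\<in>{S\<in>T. j \<in> S}. simplex_vol v S)"

text \<open>T1, T2 are regular triangulations joined by an edge of the secondary polytope
  (the convex hull of the GKZ vectors of all regular triangulations).\<close>
definition secondary_edge :: "nat \<Rightarrow> (nat \<Rightarrow> int^'d) \<Rightarrow> nat set set \<Rightarrow> nat set set \<Rightarrow> bool" where
  "secondary_edge n v T1 T2 \<longleftrightarrow>
     regular_triangulation n v T1 \<and> regular_triangulation n v T2 \<and> gkz v T1 \<noteq> gkz v T2 \<and>
     (\<exists>c::nat \<Rightarrow> real.
        {gkz v T | T. regular_triangulation n v T \<and>
            (\<forall>T'. regular_triangulation n v T' \<longrightarrow>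
               (\<Sum>j<n. c j * gkz v T' j) \<le> (\<Sum>j<n. c j * gkz v T j))}
        = {gkz v T1, gkz v T2})"

definition is_circuit :: "nat \<Rightarrow> (nat \<Rightarrow> int^'d) \<Rightarrow> nat set \<Rightarrow> bool" where
  "is_circuit n v I \<longleftrightarrow> I \<subseteq> {..<n} \<and> \<not> independent (rvec ` v ` I) \<and>
     (\<forall>j\<in>I. independent (rvec ` v ` (I - {j})))"

definition primitive_relation :: "nat \<Rightarrow> (nat \<Rightarrow> int^'d) \<Rightarrow> nat set \<Rightarrow> (nat \<Rightarrow> int) \<Rightarrow> bool" where
  "primitive_relation n v I h \<longleftrightarrow> h \<in> latL n v \<and> {j. h j \<noteq> 0} = I \<and>
     (\<forall>c::int. (\<forall>j. c dvd h j) \<longrightarrow> \<bar>c\<bar> = 1)"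

definition Iplus :: "nat \<Rightarrow> (nat \<Rightarrow> int) \<Rightarrow> nat set" where
  "Iplus n h = {j. j < n \<and> h j > 0}"

definition Iminus :: "nat \<Rightarrow> (nat \<Rightarrow> int) \<Rightarrow> nat set" where
  "Iminus n h = {j. j < n \<and> h j < 0}"

definition separating_plus :: "nat \<Rightarrow> nat set \<Rightarrow> (nat \<Rightarrow> int) \<Rightarrow> nat set set \<Rightarrow> nat set \<Rightarrow> bool" where
  "separating_plus n I h T F \<longleftrightarrow> F \<subseteq> {..<n} - I \<and> (\<forall>j\<in>Iplus n h. F \<union> (I - {j}) \<in> T)"

definition separating_minus :: "nat \<Rightarrow> nat set \<Rightarrow> (nat \<Rightarrow> int) \<Rightarrow> nat set set \<Rightarrow> nat set \<Rightarrow> bool" where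
  "separating_minus n I h T F \<longleftrightarrow> F \<subseteq> {..<n} - I \<and> (\<forall>j\<in>Iminus n h. F \<union> (I - {j}) \<in> T)"

text \<open>Essential maximal cones of Sigma_+ (given T = Sigma_+) and of Sigma_- (given T = Sigma_-).\<close>
definition ess_plus :: "nat \<Rightarrow> nat set \<Rightarrow> (nat \<Rightarrow> int) \<Rightarrow> nat set set \<Rightarrow> nat set set" where
  "ess_plus n I h T = {F \<union> (I - {j}) | F j. separating_plus n I h T F \<and> j \<in> Iplus n h}"

definition ess_minus :: "nat \<Rightarrow> nat set \<Rightarrow> (nat \<Rightarrow> int) \<Rightarrow> nat set set \<Rightarrow> nat set set" where
  "ess_minus n I h T = {F \<union> (I - {j}) | F j. separating_minus n I h T F \<and> j \<in> Iminus n h}"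

definition supp_set :: "nat \<Rightarrow> (nat \<Rightarrow> real) \<Rightarrow> (nat \<Rightarrow> int) \<Rightarrow> nat set" where
  "supp_set n \<gamma> l = {j. j < n \<and> \<not> (\<exists>k::nat. real_of_int (l j) + \<gamma> j = real k)}"

definition S_set :: "nat \<Rightarrow> (nat \<Rightarrow> int^'d) \<Rightarrow> nat set set \<Rightarrow> (nat \<Rightarrow> real) \<Rightarrow> (nat \<Rightarrow> int) set" where
  "S_set n v C \<gamma> = {l \<in> latL n v. \<exists>\<sigma>\<in>C. supp_set n \<gamma> l \<subseteq> \<sigma>}"

definition expi :: "real \<Rightarrow> complex" where
  "expi x = exp (2 * of_real pi * \<i> * of_real x)"

definition Icirc :: "nat \<Rightarrow> (nat \<Rightarrow> int) \<Rightarrow> (nat \<Rightarrow> complex) \<Rightarrow> complex set" where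
  "Icirc n h r = {t. t \<noteq> 0 \<and> (\<exists>j\<in>Iminus n h. r j * t powi (h j) = 1)}"

definition proj_h :: "(nat \<Rightarrow> int) \<Rightarrow> (nat \<Rightarrow> int) \<Rightarrow> (nat \<Rightarrow> int) set" where
  "proj_h h l = {(\<lambda>j. l j + k * h j) | k::int. True}"

end

theory Submission
  imports Defs
begin

(* In a regular triangulation with heights w, each maximal cone is cut out by a functional
   psi <= w. If sigma contains I+ and tau contains I-, pairing the relation h with
   psi_sigma - psi_tau gives a vanishing sum of nonnegative terms, which forces I into tau;
   as I is dependent this is impossible. Hence no cone of Sigma+ contains I+, no cone of
   Sigma- contains I-, and the essential cones of Sigma- are exactly the flipped cones
   F \<union> (I - {j}), j \<in> I-.
   (i) If 1 is not in I(y), then gamma_j is not an integer for j \<in> I-, so every support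
   contains I-, and a cone of Sigma+ containing it cannot survive in Sigma-: it is essential.
   A support inside a common cone of Sigma+ and Sigma- misses an element of I+ and an
   element of I-, so it lies in an essential cone of Sigma+ iff it lies in one of Sigma-.
   (ii) Adding a multiple of h changes neither the class in L/<h> nor the coordinates off I.
   If gamma_j is an integer for some j \<in> I, a suitable multiple makes l_j + gamma_j a
   nonnegative integer, which moves the support from F \<union> (I - {j'}) into F \<union> (I - {j}).
   Such j exist in I- for gamma(t) by the choice of t, and in I+ for gamma because the box
   cone misses an element of I+. *)

lemma expi_eq_1_iff: "expi x = 1 \<longleftrightarrow> x \<in> \<int>"
proof
  assume "expi x = 1"
  then obtain m :: int where "2 * pi * x = of_int (2 * m) * pi"
    unfolding expi_def exp_eq_1 by auto
  then have "x = of_int m" by simp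
  then show "x \<in> \<int>" by simp
next
  assume "x \<in> \<int>"
  then obtain m :: int where "x = of_int m" by (elim Ints_cases)
  then show "expi x = 1"
    unfolding expi_def exp_eq_1 by (auto intro: exI[of _ m])
qed

lemma expi_add: "expi (x + y) = expi x * expi y"
  by (simp add: expi_def distrib_left exp_add)

lemma expi_powi: "expi x powi m = expi (x * of_int m)"
  by (simp add: expi_def exp_power_int algebra_simps)

lemma Icirc_cong: "(\<And>j. j \<in> Iminus n h \<Longrightarrow> r j = r' j) \<Longrightarrow> Icirc n h r = Icirc n h r'"
  by (auto simp: Icirc_def)

lemma one_in_Icirc_iff: "1 \<in> Icirc n h r \<longleftrightarrow> (\<exists>j\<in>Iminus n h. r j = 1)"
  by (simp add: Icirc_def)

lemma Icirc_expi_Ints: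
  assumes "t \<in> Icirc n h (\<lambda>j. expi (g j))" and "expi \<theta> = t"
  obtains j where "j \<in> Iminus n h" and "g j + \<theta> * of_int (h j) \<in> \<int>"
proof -
  from assms obtain j where "j \<in> Iminus n h" and "expi (g j) * expi \<theta> powi h j = 1"
    by (auto simp: Icirc_def)
  then show thesis
    using that by (simp add: expi_powi flip: expi_add expi_eq_1_iff)
qed

lemma additive_scale_int:
  fixes f :: "int^'n \<Rightarrow> int"
  assumes "Modules.additive f"
  shows "f (k *s x) = k * f x"
proof (induction k rule: int_induct[where k = 0])
  case base
  show ?case using additive.zero[OF assms] by simp
next
  case (step1 i)
  have "(i + 1) *s x = i *s x + x" by (simp add: vec_eq_iff algebra_simps)
  then show ?case using step1 additive.add[OF assms] by (simp add: algebra_simps)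
next
  case (step2 i)
  have "(i - 1) *s x = i *s x - x" by (simp add: vec_eq_iff algebra_simps)
  then show ?case using step2 additive.diff[OF assms] by (simp add: algebra_simps)
qed

lemma latL_coeff_sum_eq_0:
  fixes ht :: "int^'d \<Rightarrow> int"
  assumes "Modules.additive ht" and "\<forall>j<n. ht (v j) = 1" and "l \<in> latL n v"
  shows "(\<Sum>j<n. l j) = 0"
proof -
  have "(\<Sum>j<n. l j) = ht (\<Sum>j<n. l j *s v j)"
    using assms(1,2) by (simp add: additive.sum additive_scale_int)
  also have "\<dots> = 0"
    using assms(3) additive.zero[OF assms(1)] by (simp add: latL_def)
  finally show ?thesis .
qed

lemma Iplus_Iminus_nonempty:
  fixes h :: "nat \<Rightarrow> int"
  assumes "(\<Sum>j<n. h j) = 0" and "i < n" and "h i \<noteq> 0"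
  shows "Iplus n h \<noteq> {}" and "Iminus n h \<noteq> {}"
proof -
  have one_sign: "\<not> (\<forall>j<n. 0 \<le> s * h j)" if "s \<noteq> 0" for s :: int
  proof
    assume nonneg: "\<forall>j<n. 0 \<le> s * h j"
    have "(\<Sum>j<n. s * h j) = 0"
      using assms(1) by (simp flip: sum_distrib_left)
    then have "s * h i = 0"
      using nonneg assms(2) by (subst (asm) sum_nonneg_eq_0_iff) auto
    with that assms(3) show False by simp
  qed
  show "Iplus n h \<noteq> {}"
    using one_sign[of "-1"] by (auto simp: Iplus_def)
  show "Iminus n h \<noteq> {}"
    using one_sign[of 1] by (auto simp: Iminus_def)
qed

lemma latL_inner_eq_0:
  assumes "l \<in> latL n v"
  shows "(\<Sum>j<n. real_of_int (l j) * (\<psi> \<bullet> rvec (v j))) = 0"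
proof -
  have "(\<Sum>j<n. real_of_int (l j) *\<^sub>R rvec (v j)) = rvec (\<Sum>j<n. l j *s v j)"
    by (simp add: rvec_def vec_eq_iff)
  also have "\<dots> = 0"
    using assms by (simp add: latL_def rvec_def vec_eq_iff)
  finally have "\<psi> \<bullet> (\<Sum>j<n. real_of_int (l j) *\<^sub>R rvec (v j)) = 0"
    by simp
  then show ?thesis
    by (simp add: inner_sum_right)
qed

lemma latL_support_less: "l \<in> latL n v \<Longrightarrow> l j \<noteq> 0 \<Longrightarrow> j < n"
  unfolding latL_def using not_less by blast

lemma latL_add_multiple:
  assumes "l \<in> latL n v" and "h \<in> latL n v"
  shows "(\<lambda>j. l j + k * h j) \<in> latL n v"
proof -
  have "(\<Sum>j<n. (l j + k * h j) *s v j) = (\<Sum>j<n. l j *s v j) + k *s (\<Sum>j<n. h j *s v j)"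
    by (simp add: vec_eq_iff algebra_simps sum.distrib sum_distrib_left)
  then show ?thesis using assms by (simp add: latL_def)
qed

lemma proj_h_add_multiple: "proj_h h (\<lambda>j. l j + k * h j) = proj_h h l"
proof -
  have "(\<lambda>j. l j + k * h j + k' * h j) = (\<lambda>j. l j + (k + k') * h j)"
    and "(\<lambda>j. l j + k' * h j) = (\<lambda>j. l j + k * h j + (k' - k) * h j)" for k'
    by (simp_all add: algebra_simps)
  then show ?thesis
    unfolding proj_h_def by blast
qed

lemma mem_supp_set_if_not_Ints:
  assumes "j < n" and "\<gamma> j \<notin> \<int>"
  shows "j \<in> supp_set n \<gamma> l"
proof -
  have "real_of_int (l j) + \<gamma> j \<noteq> real k" for k
  proof
    assume "real_of_int (l j) + \<gamma> j = real k"
    then have "\<gamma> j = of_int (int k - l j)"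
      by simp
    with assms(2) show False
      by simp
  qed
  with assms(1) show ?thesis
    by (simp add: supp_set_def)
qed

lemma regular_triangulation_cone_independent:
  "regular_triangulation n v T \<Longrightarrow> \<sigma> \<in> T \<Longrightarrow> independent (rvec ` v ` \<sigma>)"
  unfolding regular_triangulation_def by blast

lemma regular_triangulation_relation_support:
  fixes v :: "nat \<Rightarrow> int^'d"
  assumes T: "regular_triangulation n v T" and "\<sigma> \<in> T" and "\<tau> \<in> T" and h: "h \<in> latL n v"
    and plus: "Iplus n h \<subseteq> \<sigma>" and minus: "Iminus n h \<subseteq> \<tau>"
  shows "{j. h j \<noteq> 0} \<subseteq> \<tau>"
proof -
  obtain w :: "nat \<Rightarrow> real" where
    cones: "T = {S. \<exists>\<psi>::real^'d. (\<forall>k<n. \<psi> \<bullet> rvec (v k) \<le> w k) \<and>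
              S = {k. k < n \<and> \<psi> \<bullet> rvec (v k) = w k} \<and> card S = CARD('d)}"
    using T unfolding regular_triangulation_def by blast
  obtain \<psi>1 :: "real^'d" where \<psi>1: "\<forall>k<n. \<psi>1 \<bullet> rvec (v k) \<le> w k"
    and \<sigma>: "\<sigma> = {k. k < n \<and> \<psi>1 \<bullet> rvec (v k) = w k}"
    using \<open>\<sigma> \<in> T\<close> cones by blast
  obtain \<psi>2 :: "real^'d" where \<psi>2: "\<forall>k<n. \<psi>2 \<bullet> rvec (v k) \<le> w k"
    and \<tau>: "\<tau> = {k. k < n \<and> \<psi>2 \<bullet> rvec (v k) = w k}"
    using \<open>\<tau> \<in> T\<close> cones by blast
  define a where "a j = \<psi>1 \<bullet> rvec (v j)" for j
  define b where "b j = \<psi>2 \<bullet> rvec (v j)" for j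
  have terms_nonneg: "\<forall>j\<in>{..<n}. 0 \<le> real_of_int (h j) * (a j - b j)"
  proof
    fix j assume "j \<in> {..<n}"
    then have "h j > 0 \<Longrightarrow> a j = w j" and "h j < 0 \<Longrightarrow> b j = w j" and "a j \<le> w j" "b j \<le> w j"
      using plus minus \<psi>1 \<psi>2 \<sigma> \<tau> by (auto simp: Iplus_def Iminus_def a_def b_def)
    then show "0 \<le> real_of_int (h j) * (a j - b j)"
      by (cases "h j" "0::int" rule: linorder_cases) (auto simp: mult_nonpos_nonpos)
  qed
  have "(\<Sum>j<n. real_of_int (h j) * (a j - b j)) = 0"
    using latL_inner_eq_0[OF h, of \<psi>1] latL_inner_eq_0[OF h, of \<psi>2]
    by (simp add: a_def b_def right_diff_distrib sum_subtractf)
  with terms_nonneg have terms_0: "\<forall>j\<in>{..<n}. real_of_int (h j) * (a j - b j) = 0"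
    by (subst (asm) sum_nonneg_eq_0_iff) auto
  show "{j. h j \<noteq> 0} \<subseteq> \<tau>"
  proof
    fix j assume "j \<in> {j. h j \<noteq> 0}"
    then have j: "j < n" "h j \<noteq> 0"
      using latL_support_less[OF h] by auto
    show "j \<in> \<tau>"
    proof (cases "h j > 0")
      case True
      then have "a j = w j"
        using j plus \<sigma> by (auto simp: Iplus_def a_def)
      moreover have "a j = b j"
        using j terms_0 by auto
      ultimately show ?thesis
        using j \<tau> by (simp add: b_def)
    next
      case False
      with j minus show ?thesis by (auto simp: Iminus_def)
    qed
  qed
qed

lemma proj_S_set_subset_by_shift:
  assumes h: "h \<in> latL n v"
    and off_support: "\<And>i. h i = 0 \<Longrightarrow> \<gamma>' i = \<gamma> i"
    and j: "h j \<noteq> 0" "\<gamma>' j \<in> \<int>"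
    and cones: "\<And>\<sigma>. \<sigma> \<in> C \<Longrightarrow>
        \<exists>\<sigma>'\<in>C'. \<sigma> - {i. h i \<noteq> 0} \<subseteq> \<sigma>' \<and> {i. h i \<noteq> 0} - {j} \<subseteq> \<sigma>'"
  shows "proj_h h ` S_set n v C \<gamma> \<subseteq> proj_h h ` S_set n v C' \<gamma>'"
proof
  fix x assume "x \<in> proj_h h ` S_set n v C \<gamma>"
  then obtain l \<sigma> where x: "x = proj_h h l" and l: "l \<in> latL n v"
    and "\<sigma> \<in> C" and supp: "supp_set n \<gamma> l \<subseteq> \<sigma>"
    by (auto simp: S_set_def)
  then obtain \<sigma>' where "\<sigma>' \<in> C'" and \<sigma>': "\<sigma> - {i. h i \<noteq> 0} \<subseteq> \<sigma>'" "{i. h i \<noteq> 0} - {j} \<subseteq> \<sigma>'"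
    using cones by blast
  have "real_of_int (l j) + \<gamma>' j \<in> \<int>"
    using j(2) by simp
  then obtain m :: int where m: "real_of_int (l j) + \<gamma>' j = of_int m"
    by (elim Ints_cases)
  define k where "k = \<bar>m\<bar> * h j"
  define l' where "l' = (\<lambda>i. l i + k * h i)"
  have "0 < h j * h j"
    using j(1) by (auto simp: zero_less_mult_iff linorder_neq_iff)
  then have "\<bar>m\<bar> \<le> \<bar>m\<bar> * (h j * h j)"
    by (simp add: mult_le_cancel_left1)
  then have "0 \<le> m + k * h j"
    by (simp add: k_def algebra_simps)
  moreover have "real_of_int (l' j) + \<gamma>' j = of_int (m + k * h j)"
    using m by (simp add: l'_def algebra_simps)
  ultimately have "j \<notin> supp_set n \<gamma>' l'"
    unfolding supp_set_def by (auto intro!: exI[of _ "nat (m + k * h j)"])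
  moreover have "i \<in> supp_set n \<gamma> l" if "i \<in> supp_set n \<gamma>' l'" "h i = 0" for i
    using that off_support by (simp add: supp_set_def l'_def)
  ultimately have "supp_set n \<gamma>' l' \<subseteq> \<sigma>'"
    using supp \<sigma>' by blast
  then have "l' \<in> S_set n v C' \<gamma>'"
    using \<open>\<sigma>' \<in> C'\<close> latL_add_multiple[OF l h] by (auto simp: S_set_def l'_def)
  moreover have "proj_h h l' = x"
    unfolding x l'_def by (rule proj_h_add_multiple)
  ultimately show "x \<in> proj_h h ` S_set n v C' \<gamma>'"
    by blast
qed

locale circuit_flip =
  fixes n :: nat and v :: "nat \<Rightarrow> int^'d" and I :: "nat set" and h :: "nat \<Rightarrow> int"
    and Tp Tm :: "nat set set"
  assumes regular_Tp: "regular_triangulation n v Tp"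
    and regular_Tm: "regular_triangulation n v Tm"
    and relation: "h \<in> latL n v"
    and support: "{j. h j \<noteq> 0} = I"
    and dependent: "\<not> independent (rvec ` v ` I)"
    and Iplus_nonempty: "Iplus n h \<noteq> {}"
    and Iminus_nonempty: "Iminus n h \<noteq> {}"
    and flip: "Tm = (Tp - ess_plus n I h Tp)
                  \<union> {F \<union> (I - {j}) | F j. separating_plus n I h Tp F \<and> j \<in> Iminus n h}"
    and Tm_ne_Tp: "Tm \<noteq> Tp"
begin

definition flipped :: "nat set set" where
  "flipped = {F \<union> (I - {j}) | F j. separating_plus n I h Tp F \<and> j \<in> Iminus n h}"

lemma Tm_eq: "Tm = (Tp - ess_plus n I h Tp) \<union> flipped"
  using flip by (simp add: flipped_def)

lemma flipped_memI: "separating_plus n I h Tp F \<Longrightarrow> j \<in> Iminus n h \<Longrightarrow> F \<union> (I - {j}) \<in> flipped"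
  unfolding flipped_def by blast

lemma ess_plus_memI: "separating_plus n I h Tp F \<Longrightarrow> j \<in> Iplus n h \<Longrightarrow> F \<union> (I - {j}) \<in> ess_plus n I h Tp"
  unfolding ess_plus_def by blast

lemma Iplus_subset: "Iplus n h \<subseteq> I"
  using support by (auto simp: Iplus_def)

lemma Iminus_subset: "Iminus n h \<subseteq> I"
  using support by (auto simp: Iminus_def)

lemma Iplus_Iminus_disjoint: "Iplus n h \<inter> Iminus n h = {}"
  by (auto simp: Iplus_def Iminus_def)

lemma ess_plus_subset: "ess_plus n I h Tp \<subseteq> Tp"
  by (auto simp: ess_plus_def separating_plus_def)

lemma separating_exists:
  obtains F where "separating_plus n I h Tp F"
proof -
  have "\<exists>F. separating_plus n I h Tp F"
  proof (rule ccontr)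
    assume "\<nexists>F. separating_plus n I h Tp F"
    then have "Tm = Tp"
      using flip by (simp add: ess_plus_def)
    with Tm_ne_Tp show False ..
  qed
  with that show thesis by blast
qed

lemma no_cones_over_both_halves:
  assumes "regular_triangulation n v T" and "\<sigma> \<in> T" and "\<tau> \<in> T"
    and "Iplus n h \<subseteq> \<sigma>" and "Iminus n h \<subseteq> \<tau>"
  shows False
proof -
  have "rvec ` v ` I \<subseteq> rvec ` v ` \<tau>"
    using regular_triangulation_relation_support[OF assms(1-3) relation assms(4,5)] support
    by (intro image_mono) simp
  moreover have "independent (rvec ` v ` \<tau>)"
    using assms(1,3) by (rule regular_triangulation_cone_independent)
  ultimately show False
    using dependent independent_mono by blast
qed

lemma no_Tp_cone_contains_Iplus:
  assumes "\<sigma> \<in> Tp"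
  shows "\<not> Iplus n h \<subseteq> \<sigma>"
proof
  assume "Iplus n h \<subseteq> \<sigma>"
  obtain F where F: "separating_plus n I h Tp F"
    by (rule separating_exists)
  obtain j where "j \<in> Iplus n h"
    using Iplus_nonempty by blast
  then have "F \<union> (I - {j}) \<in> Tp" and "Iminus n h \<subseteq> F \<union> (I - {j})"
    using F Iminus_subset Iplus_Iminus_disjoint by (auto simp: separating_plus_def)
  with assms \<open>Iplus n h \<subseteq> \<sigma>\<close> show False
    using no_cones_over_both_halves[OF regular_Tp] by blast
qed

lemma no_Tm_cone_contains_Iminus:
  assumes "\<sigma> \<in> Tm"
  shows "\<not> Iminus n h \<subseteq> \<sigma>"
proof
  assume "Iminus n h \<subseteq> \<sigma>"
  obtain F where F: "separating_plus n I h Tp F"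
    by (rule separating_exists)
  obtain j where "j \<in> Iminus n h"
    using Iminus_nonempty by blast
  then have "F \<union> (I - {j}) \<in> Tm" and "Iplus n h \<subseteq> F \<union> (I - {j})"
    using F Iplus_subset Iplus_Iminus_disjoint Tm_eq by (auto simp: flipped_def)
  with assms \<open>Iminus n h \<subseteq> \<sigma>\<close> show False
    using no_cones_over_both_halves[OF regular_Tm] by blast
qed

lemma ess_minus_eq_flipped: "ess_minus n I h Tm = flipped"
proof
  show "ess_minus n I h Tm \<subseteq> flipped"
  proof
    fix \<sigma> assume "\<sigma> \<in> ess_minus n I h Tm"
    then obtain F j where \<sigma>: "\<sigma> = F \<union> (I - {j})" and F: "separating_minus n I h Tm F"
      and j: "j \<in> Iminus n h"
      unfolding ess_minus_def by blast
    have "\<sigma> \<in> Tm"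
      using F j \<sigma> by (simp add: separating_minus_def)
    moreover have "Iplus n h \<subseteq> \<sigma>"
      using \<sigma> j Iplus_subset Iplus_Iminus_disjoint by auto
    ultimately show "\<sigma> \<in> flipped"
      using Tm_eq no_Tp_cone_contains_Iplus by blast
  qed
  show "flipped \<subseteq> ess_minus n I h Tm"
  proof
    fix \<sigma> assume "\<sigma> \<in> flipped"
    then obtain F j where \<sigma>: "\<sigma> = F \<union> (I - {j})" and F: "separating_plus n I h Tp F"
      and j: "j \<in> Iminus n h"
      unfolding flipped_def by blast
    have "separating_minus n I h Tm F"
      using F Tm_eq by (auto simp: separating_minus_def separating_plus_def flipped_def)
    with \<sigma> j show "\<sigma> \<in> ess_minus n I h Tm"
      unfolding ess_minus_def by blast
  qed
qed

lemma S_set_ess_plus_eq: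
  assumes "\<And>l. Iminus n h \<subseteq> supp_set n \<gamma> l"
  shows "S_set n v (ess_plus n I h Tp) \<gamma> = S_set n v Tp \<gamma>"
proof
  show "S_set n v (ess_plus n I h Tp) \<gamma> \<subseteq> S_set n v Tp \<gamma>"
    using ess_plus_subset by (auto simp: S_set_def)
  show "S_set n v Tp \<gamma> \<subseteq> S_set n v (ess_plus n I h Tp) \<gamma>"
  proof
    fix l assume "l \<in> S_set n v Tp \<gamma>"
    then obtain \<sigma> where l: "l \<in> latL n v" and "\<sigma> \<in> Tp" and supp: "supp_set n \<gamma> l \<subseteq> \<sigma>"
      by (auto simp: S_set_def)
    have "\<sigma> \<in> ess_plus n I h Tp"
    proof (rule ccontr)
      assume "\<sigma> \<notin> ess_plus n I h Tp"
      with \<open>\<sigma> \<in> Tp\<close> have "\<sigma> \<in> Tm"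
        using Tm_eq by blast
      with assms supp show False
        using no_Tm_cone_contains_Iminus by blast
    qed
    with l supp show "l \<in> S_set n v (ess_plus n I h Tp) \<gamma>"
      by (auto simp: S_set_def)
  qed
qed

lemma S_set_diff_ess_eq:
  "S_set n v Tp \<gamma> - S_set n v (ess_plus n I h Tp) \<gamma> = S_set n v Tm \<gamma> - S_set n v (ess_minus n I h Tm) \<gamma>"
proof (rule set_eqI)
  fix l
  let ?inside = "\<lambda>C. \<exists>\<sigma>\<in>C. supp_set n \<gamma> l \<subseteq> \<sigma>"
  have ess_iff: "?inside (ess_plus n I h Tp) \<longleftrightarrow> ?inside flipped"
    if "?inside (Tp - ess_plus n I h Tp)"
  proof -
    from that obtain \<sigma> where "\<sigma> \<in> Tp" "\<sigma> \<in> Tm" "supp_set n \<gamma> l \<subseteq> \<sigma>"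
      using Tm_eq by blast
    then obtain jp jm where jp: "jp \<in> Iplus n h" "jp \<notin> supp_set n \<gamma> l"
      and jm: "jm \<in> Iminus n h" "jm \<notin> supp_set n \<gamma> l"
      using no_Tp_cone_contains_Iplus no_Tm_cone_contains_Iminus by blast
    show ?thesis
    proof
      assume "?inside (ess_plus n I h Tp)"
      then obtain F j where F: "separating_plus n I h Tp F" and "supp_set n \<gamma> l \<subseteq> F \<union> (I - {j})"
        unfolding ess_plus_def by blast
      then have "supp_set n \<gamma> l \<subseteq> F \<union> (I - {jm})"
        using jm Iminus_subset by blast
      with flipped_memI[OF F jm(1)] show "?inside flipped" ..
    next
      assume "?inside flipped"
      then obtain F j where F: "separating_plus n I h Tp F" and "supp_set n \<gamma> l \<subseteq> F \<union> (I - {j})"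
        unfolding flipped_def by blast
      then have "supp_set n \<gamma> l \<subseteq> F \<union> (I - {jp})"
        using jp Iplus_subset by blast
      with ess_plus_memI[OF F jp(1)] show "?inside (ess_plus n I h Tp)" ..
    qed
  qed
  have "?inside Tp \<and> \<not> ?inside (ess_plus n I h Tp)
      \<longleftrightarrow> ?inside (Tp - ess_plus n I h Tp) \<and> \<not> ?inside (ess_plus n I h Tp)"
    by blast
  also have "\<dots> \<longleftrightarrow> ?inside (Tp - ess_plus n I h Tp) \<and> \<not> ?inside flipped"
    using ess_iff by blast
  also have "\<dots> \<longleftrightarrow> ?inside Tm \<and> \<not> ?inside flipped"
    unfolding Tm_eq by blast
  finally show "l \<in> S_set n v Tp \<gamma> - S_set n v (ess_plus n I h Tp) \<gamma> \<longleftrightarrow>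
      l \<in> S_set n v Tm \<gamma> - S_set n v (ess_minus n I h Tm) \<gamma>"
    unfolding ess_minus_eq_flipped S_set_def by blast
qed

lemma proj_S_set_ess_eq:
  assumes off_I: "\<And>i. i \<notin> I \<Longrightarrow> \<gamma>' i = \<gamma> i"
    and jm: "jm \<in> Iminus n h" "\<gamma>' jm \<in> \<int>"
    and jp: "jp \<in> Iplus n h" "\<gamma> jp \<in> \<int>"
  shows "proj_h h ` S_set n v (ess_plus n I h Tp) \<gamma> = proj_h h ` S_set n v (ess_minus n I h Tm) \<gamma>'"
proof
  have off_support: "\<gamma>' i = \<gamma> i" "\<gamma> i = \<gamma>' i" if "h i = 0" for i
    using off_I[of i] that support by auto
  have "h jm \<noteq> 0" and "h jp \<noteq> 0"
    using jm jp by (auto simp: Iminus_def Iplus_def)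
  show "proj_h h ` S_set n v (ess_plus n I h Tp) \<gamma> \<subseteq> proj_h h ` S_set n v (ess_minus n I h Tm) \<gamma>'"
  proof (rule proj_S_set_subset_by_shift[where \<gamma> = \<gamma> and \<gamma>' = \<gamma>', OF relation off_support(1) \<open>h jm \<noteq> 0\<close> jm(2)])
    fix \<sigma> assume "\<sigma> \<in> ess_plus n I h Tp"
    then obtain F j where \<sigma>: "\<sigma> = F \<union> (I - {j})" and F: "separating_plus n I h Tp F"
      unfolding ess_plus_def by blast
    have "F \<union> (I - {jm}) \<in> ess_minus n I h Tm"
      unfolding ess_minus_eq_flipped using F jm(1) by (rule flipped_memI)
    moreover have "\<sigma> - I \<subseteq> F \<union> (I - {jm})"
      using \<sigma> by blast
    ultimately show "\<exists>\<sigma>'\<in>ess_minus n I h Tm. \<sigma> - {i. h i \<noteq> 0} \<subseteq> \<sigma>' \<and> {i. h i \<noteq> 0} - {jm} \<subseteq> \<sigma>'"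
      unfolding support by blast
  qed
  show "proj_h h ` S_set n v (ess_minus n I h Tm) \<gamma>' \<subseteq> proj_h h ` S_set n v (ess_plus n I h Tp) \<gamma>"
  proof (rule proj_S_set_subset_by_shift[where \<gamma> = \<gamma>' and \<gamma>' = \<gamma>, OF relation off_support(2) \<open>h jp \<noteq> 0\<close> jp(2)])
    fix \<sigma> assume "\<sigma> \<in> ess_minus n I h Tm"
    then obtain F j where \<sigma>: "\<sigma> = F \<union> (I - {j})" and F: "separating_plus n I h Tp F"
      unfolding ess_minus_eq_flipped flipped_def by blast
    have "F \<union> (I - {jp}) \<in> ess_plus n I h Tp"
      using F jp(1) by (rule ess_plus_memI)
    moreover have "\<sigma> - I \<subseteq> F \<union> (I - {jp})"
      using \<sigma> by blast
    ultimately show "\<exists>\<sigma>'\<in>ess_plus n I h Tp. \<sigma> - {i. h i \<noteq> 0} \<subseteq> \<sigma>' \<and> {i. h i \<noteq> 0} - {jp} \<subseteq> \<sigma>'"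
      unfolding support by blast
  qed
qed

end

lemma circuit_flipI:
  fixes v :: "nat \<Rightarrow> int^'d" and ht :: "int^'d \<Rightarrow> int"
  assumes "Modules.additive ht" and "\<forall>j<n. ht (v j) = 1"
    and "secondary_edge n v Tp Tm" and "is_circuit n v I" and "primitive_relation n v I h"
    and "Tm = (Tp - ess_plus n I h Tp)
               \<union> {F \<union> (I - {j}) | F j. separating_plus n I h Tp F \<and> j \<in> Iminus n h}"
  shows "circuit_flip n v I h Tp Tm"
proof -
  have h: "h \<in> latL n v" and support: "{j. h j \<noteq> 0} = I"
    using assms(5) by (auto simp: primitive_relation_def)
  have dependent: "\<not> independent (rvec ` v ` I)"
    using assms(4) by (simp add: is_circuit_def)
  then obtain i where "i \<in> I"
    by (metis all_not_in_conv image_empty independent_empty)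
  then have "i < n" and "h i \<noteq> 0"
    using support latL_support_less[OF h] by auto
  moreover have "(\<Sum>j<n. h j) = 0"
    using assms(1,2) h by (rule latL_coeff_sum_eq_0)
  ultimately show ?thesis
    using assms(3,6) h support dependent Iplus_Iminus_nonempty
    by unfold_locales (auto simp: secondary_edge_def)
qed

theorem proposition4p6:
  fixes n :: nat and v :: "nat \<Rightarrow> int^'d" and ht :: "int^'d \<Rightarrow> int" and \<beta> :: "int^'d"
    and Tp Tm :: "nat set set" and I :: "nat set" and h :: "nat \<Rightarrow> int"
    and \<sigma>0 :: "nat set" and q :: "nat \<Rightarrow> real" and vb :: "int^'d"
    and \<gamma> :: "nat \<Rightarrow> real" and \<theta> :: "complex \<Rightarrow> real"
  assumes inj: "inj_on v {..<n}"
    and gen: "\<forall>x::int^'d. \<exists>c::nat \<Rightarrow> int. x = (\<Sum>j<n. c j *s v j)"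
    and ht_hom: "\<forall>x y. ht (x + y) = ht x + ht y"
    and ht_one: "\<forall>j<n. ht (v j) = 1"
    and edge: "secondary_edge n v Tp Tm"
    and circ: "is_circuit n v I"
    and prim: "primitive_relation n v I h"
    and flip: "Tm = (Tp - ess_plus n I h Tp)
                  \<union> {F \<union> (I - {j}) | F j. separating_plus n I h Tp F \<and> j \<in> Iminus n h}"
    and box_cone: "\<sigma>0 \<in> Tp"
    and box_q: "\<forall>j<n. 0 \<le> q j \<and> q j < 1"
    and box_supp: "\<forall>j<n. j \<notin> \<sigma>0 \<longrightarrow> q j = 0"
    and box_pt: "(\<Sum>j<n. q j *\<^sub>R rvec (v j)) = rvec vb"
    and gamma_rat: "\<forall>j<n. \<gamma> j \<in> \<rat>"
    and gamma_exp: "\<forall>j<n. expi (\<gamma> j) = expi (q j)"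
    and gamma_sum: "(\<Sum>j<n. \<gamma> j *\<^sub>R rvec (v j)) = rvec \<beta>"
    and theta: "\<forall>t\<in>Icirc n h (\<lambda>j. expi (q j)). \<theta> t \<in> \<rat> \<and> expi (\<theta> t) = t"
    and theta1: "\<theta> 1 = 0"
  shows "(1 \<notin> Icirc n h (\<lambda>j. expi (q j)) \<longrightarrow>
            S_set n v (ess_plus n I h Tp) \<gamma> = S_set n v Tp \<gamma>)
       \<and> (1 \<in> Icirc n h (\<lambda>j. expi (q j)) \<longrightarrow>
            (\<lambda>j. \<gamma> j + \<theta> 1 * real_of_int (h j)) = \<gamma>
          \<and> S_set n v Tp \<gamma> - S_set n v (ess_plus n I h Tp) \<gamma>
            = S_set n v Tm \<gamma> - S_set n v (ess_minus n I h Tm) \<gamma>)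
       \<and> (\<forall>t\<in>Icirc n h (\<lambda>j. expi (q j)).
            proj_h h ` S_set n v (ess_plus n I h Tp) \<gamma>
            = proj_h h ` S_set n v (ess_minus n I h Tm) (\<lambda>j. \<gamma> j + \<theta> t * real_of_int (h j)))"
proof -
  have "Modules.additive ht"
    using ht_hom by (simp add: Modules.additive_def)
  then interpret circuit_flip n v I h Tp Tm
    using ht_one edge circ prim flip by (rule circuit_flipI)
  have Icirc_eq: "Icirc n h (\<lambda>j. expi (q j)) = Icirc n h (\<lambda>j. expi (\<gamma> j))"
    using gamma_exp by (intro Icirc_cong) (simp add: Iminus_def)
  have essential: "S_set n v (ess_plus n I h Tp) \<gamma> = S_set n v Tp \<gamma>"
    if "1 \<notin> Icirc n h (\<lambda>j. expi (\<gamma> j))"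
    using that by (intro S_set_ess_plus_eq subsetI mem_supp_set_if_not_Ints)
      (auto simp: one_in_Icirc_iff expi_eq_1_iff Iminus_def)
  have projections: "proj_h h ` S_set n v (ess_plus n I h Tp) \<gamma>
      = proj_h h ` S_set n v (ess_minus n I h Tm) (\<lambda>j. \<gamma> j + \<theta> t * real_of_int (h j))"
    if t: "t \<in> Icirc n h (\<lambda>j. expi (\<gamma> j))" for t
  proof -
    obtain jm where jm: "jm \<in> Iminus n h" "\<gamma> jm + \<theta> t * real_of_int (h jm) \<in> \<int>"
      using Icirc_expi_Ints[OF t] theta t Icirc_eq by metis
    obtain jp where jp: "jp \<in> Iplus n h" "jp \<notin> \<sigma>0"
      using no_Tp_cone_contains_Iplus[OF box_cone] by blast
    then have "\<gamma> jp \<in> \<int>"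
      using box_supp gamma_exp by (simp add: Iplus_def flip: expi_eq_1_iff) (simp add: expi_def)
    with jm jp(1) show ?thesis
      using support by (intro proj_S_set_ess_eq) auto
  qed
  show ?thesis
    unfolding Icirc_eq using essential projections S_set_diff_ess_eq theta1 by simp
qed

end
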